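(* Let $r\ge 3$ and let $c_r=\sup\{q_{\min}(G)/v(G): G \text{ is a graph with no } K_{r+1}\}$. Then $1-\frac{2}{r}\le c_r\le 1-\frac{3}{3r-1}$.
   Context: Graphs are finite and simple with at least one vertex; $v(G)$ denotes the number of vertices of $G$; "with no $K_{r+1}$" means containing no complete subgraph on $r+1$ vertices. For a graph $G$ with adjacency matrix $A$ and diagonal degree matrix $D$, the signless Laplacian is $Q(G)=D+A$, and $q_{\min}(G)$ denotes its smallest eigenvalue. *)

theory Defs
  imports "Jordan_Normal_Form.Char_Poly"
begin

definition simple_graph :: "nat \<Rightarrow> (nat \<Rightarrow> nat \<Rightarrow> bool) \<Rightarrow> bool" where
  "simple_graph n E \<longleftrightarrow> n \<ge> 1 \<and>
     (\<forall>i<n. \<not> E i i) \<and> (\<forall>i<n. \<forall>j<n. E i j \<longrightarrow> E j i)"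

definition degree :: "nat \<Rightarrow> (nat \<Rightarrow> nat \<Rightarrow> bool) \<Rightarrow> nat \<Rightarrow> nat" where
  "degree n E i = card {j. j < n \<and> E i j}"

definition has_clique :: "nat \<Rightarrow> (nat \<Rightarrow> nat \<Rightarrow> bool) \<Rightarrow> nat \<Rightarrow> bool" where
  "has_clique n E k \<longleftrightarrow> (\<exists>S. S \<subseteq> {0..<n} \<and> card S = k \<and>
      (\<forall>i\<in>S. \<forall>j\<in>S. i \<noteq> j \<longrightarrow> E i j))"

definition signless_laplacian :: "nat \<Rightarrow> (nat \<Rightarrow> nat \<Rightarrow> bool) \<Rightarrow> real mat" where
  "signless_laplacian n E = mat n n (\<lambda>(i,j).
     (if i = j then real (degree n E i) else 0) + (if E i j then 1 else 0))"

definition q_min :: "nat \<Rightarrow> (nat \<Rightarrow> nat \<Rightarrow> bool) \<Rightarrow> real" where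
  "q_min n E = Min {k. eigenvalue (signless_laplacian n E) k}"

definition c_const :: "nat \<Rightarrow> real" where
  "c_const r = Sup {q_min n E / real n | n E. simple_graph n E \<and> \<not> has_clique n E (r + 1)}"

end

theory Submission
  imports Defs "HOL-Analysis.Function_Topology"
begin

text \<open>The lower bound comes from the complete graph K_r, whose signless Laplacian
  is (r - 2) I + J, so q_min(K_r) = r - 2.

  For the upper bound, q_min is the minimum of the Rayleigh quotient y'Qy / |y|^2. Fix a
  maximum clique K of size k \<le> r and, for i \<in> K, let A_i be the set of vertices adjacent
  to all of K except i. By maximality each A_i is independent, the A_i are disjoint, and
  a vertex outside all A_i has at most k - 2 neighbours in K. Testing the Rayleigh quotient
  on unit vectors gives q_min \<le> min degree, so double counting yields
  k q_min \<le> n (k - 2) + \<Sum> |A_i|; testing it on 1_{A_i} - 1_{A_j} gives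
  q_min \<le> n - |A_i| - |A_j|. Eliminating \<Sum> |A_i| gives q_min \<le> (1 - 4/(3k)) n, and
  4/(3k) \<ge> 4/(3r) \<ge> 3/(3r - 1).\<close>

section \<open>Rayleigh quotients of symmetric matrices\<close>

definition quad_form :: "real mat \<Rightarrow> nat \<Rightarrow> (nat \<Rightarrow> real) \<Rightarrow> real" where
  "quad_form M n y = (\<Sum>i<n. \<Sum>j<n. M $$ (i,j) * y i * y j)"

definition sq_norm :: "nat \<Rightarrow> (nat \<Rightarrow> real) \<Rightarrow> real" where
  "sq_norm n y = (\<Sum>i<n. (y i)\<^sup>2)"

lemma sq_norm_nonneg: "0 \<le> sq_norm n y"
  unfolding sq_norm_def by (intro sum_nonneg) auto

lemma sq_norm_eq_0_iff: "sq_norm n y = 0 \<longleftrightarrow> (\<forall>i<n. y i = 0)"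
  unfolding sq_norm_def by (subst sum_nonneg_eq_0_iff) auto

lemma square_le_sq_norm: "i < n \<Longrightarrow> (y i)\<^sup>2 \<le> sq_norm n y"
  unfolding sq_norm_def by (intro member_le_sum) auto

lemma quad_form_cong: "(\<And>i. i < n \<Longrightarrow> y i = z i) \<Longrightarrow> quad_form M n y = quad_form M n z"
  unfolding quad_form_def by (intro sum.cong refl) auto

lemma sq_norm_cong: "(\<And>i. i < n \<Longrightarrow> y i = z i) \<Longrightarrow> sq_norm n y = sq_norm n z"
  unfolding sq_norm_def by (intro sum.cong refl) auto

lemma quad_form_scale: "quad_form M n (\<lambda>i. c * y i) = c\<^sup>2 * quad_form M n y"
  unfolding quad_form_def by (simp add: sum_distrib_left power2_eq_square mult_ac)

lemma sq_norm_scale: "sq_norm n (\<lambda>i. c * y i) = c\<^sup>2 * sq_norm n y"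
  unfolding sq_norm_def by (simp add: sum_distrib_left power_mult_distrib)

lemma quad_form_add_scaled:
  assumes sym: "\<And>i j. i < n \<Longrightarrow> j < n \<Longrightarrow> M $$ (i,j) = M $$ (j,i)"
  shows "quad_form M n (\<lambda>i. u i + t * v i) =
    quad_form M n u + 2 * t * (\<Sum>i<n. v i * (\<Sum>j<n. M $$ (i,j) * u j)) + t\<^sup>2 * quad_form M n v"
proof -
  have cross: "(\<Sum>i<n. \<Sum>j<n. M $$ (i,j) * (u i * v j + v i * u j))
      = 2 * (\<Sum>i<n. v i * (\<Sum>j<n. M $$ (i,j) * u j))"
  proof -
    have "(\<Sum>i<n. \<Sum>j<n. M $$ (i,j) * (u i * v j)) = (\<Sum>j<n. \<Sum>i<n. v j * (M $$ (j,i) * u i))"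
      by (subst sum.swap) (intro sum.cong refl, simp add: sym mult_ac)
    then show ?thesis
      by (simp add: distrib_left sum.distrib sum_distrib_left mult_ac)
  qed
  have "quad_form M n (\<lambda>i. u i + t * v i) = quad_form M n u
      + t * (\<Sum>i<n. \<Sum>j<n. M $$ (i,j) * (u i * v j + v i * u j)) + t\<^sup>2 * quad_form M n v"
    unfolding quad_form_def
    by (simp add: sum_distrib_left sum.distrib[symmetric] algebra_simps power2_eq_square)
  then show ?thesis using cross by simp
qed

lemma sq_norm_add_scaled:
  "sq_norm n (\<lambda>i. u i + t * v i) = sq_norm n u + 2 * t * (\<Sum>i<n. u i * v i) + t\<^sup>2 * sq_norm n v"
  by (simp add: sq_norm_def sum_distrib_left sum.distrib[symmetric] algebra_simps power2_eq_square)

lemma quad_form_eigen: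
  assumes "\<And>i. i < n \<Longrightarrow> (\<Sum>j<n. M $$ (i,j) * y j) = k * y i"
  shows "quad_form M n y = k * sq_norm n y"
proof -
  have "quad_form M n y = (\<Sum>i<n. y i * (\<Sum>j<n. M $$ (i,j) * y j))"
    unfolding quad_form_def by (simp add: sum_distrib_left mult_ac)
  also have "\<dots> = (\<Sum>i<n. k * (y i)\<^sup>2)"
    by (intro sum.cong refl) (simp add: assms power2_eq_square)
  finally show ?thesis
    unfolding sq_norm_def by (simp add: sum_distrib_left)
qed

lemma mult_mat_vec_index:
  "M \<in> carrier_mat n n \<Longrightarrow> i < n \<Longrightarrow> (M *\<^sub>v vec n y) $ i = (\<Sum>j<n. M $$ (i,j) * y j)"
  by (auto simp: mult_mat_vec_def scalar_prod_def atLeast0LessThan intro!: sum.cong)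

lemma eigenvalue_iff_eigenfunction:
  assumes M: "M \<in> carrier_mat n n"
  shows "eigenvalue M k \<longleftrightarrow>
    (\<exists>y. (\<exists>i<n. y i \<noteq> 0) \<and> (\<forall>i<n. (\<Sum>j<n. M $$ (i,j) * y j) = k * y i))"
proof
  assume "eigenvalue M k"
  then obtain v where v: "v \<in> carrier_vec n" "v \<noteq> 0\<^sub>v n" "M *\<^sub>v v = k \<cdot>\<^sub>v v"
    using M unfolding eigenvalue_def eigenvector_def by auto
  have "v = vec n (\<lambda>i. v $ i)" using v(1) by auto
  then have "\<forall>i<n. (\<Sum>j<n. M $$ (i,j) * v $ j) = k * v $ i"
    using v(1,3) M mult_mat_vec_index[OF M] by (metis index_smult_vec(1) carrier_vecD)
  moreover have "\<exists>i<n. v $ i \<noteq> 0" using v(1,2) by (metis eq_vecI carrier_vecD index_zero_vec)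
  ultimately show "\<exists>y. (\<exists>i<n. y i \<noteq> 0) \<and> (\<forall>i<n. (\<Sum>j<n. M $$ (i,j) * y j) = k * y i)"
    by blast
next
  assume "\<exists>y. (\<exists>i<n. y i \<noteq> 0) \<and> (\<forall>i<n. (\<Sum>j<n. M $$ (i,j) * y j) = k * y i)"
  then obtain y where y: "\<exists>i<n. y i \<noteq> 0" "\<And>i. i < n \<Longrightarrow> (\<Sum>j<n. M $$ (i,j) * y j) = k * y i"
    by blast
  have "M *\<^sub>v vec n y = k \<cdot>\<^sub>v vec n y"
  proof (rule eq_vecI)
    show "(M *\<^sub>v vec n y) $ i = (k \<cdot>\<^sub>v vec n y) $ i" if "i < dim_vec (k \<cdot>\<^sub>v vec n y)" for i
      using that mult_mat_vec_index[OF M, of i y] y(2)[of i] by simp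
  qed (use M in simp)
  moreover have "vec n y \<noteq> 0\<^sub>v n" using y(1) by (metis index_vec index_zero_vec(1))
  ultimately show "eigenvalue M k"
    using M unfolding eigenvalue_def eigenvector_def by (intro exI[of _ "vec n y"]) auto
qed

lemma eigenvalue_ge_if_quad_form_ge:
  assumes M: "M \<in> carrier_mat n n" and ev: "eigenvalue M k"
    and ge: "\<And>y. c * sq_norm n y \<le> quad_form M n y"
  shows "c \<le> k"
proof -
  obtain y where y: "\<exists>i<n. y i \<noteq> 0" "\<And>i. i < n \<Longrightarrow> (\<Sum>j<n. M $$ (i,j) * y j) = k * y i"
    using ev unfolding eigenvalue_iff_eigenfunction[OF M] by blast
  have "sq_norm n y > 0" using y(1) sq_norm_nonneg[of n y] sq_norm_eq_0_iff[of n y] by auto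
  moreover have "c * sq_norm n y \<le> k * sq_norm n y" using ge[of y] quad_form_eigen[OF y(2)] by simp
  ultimately show ?thesis by simp
qed

lemma continuous_on_coordinate: "continuous_on S (\<lambda>x::nat \<Rightarrow> real. x i)"
  by (rule continuous_on_subset[OF continuous_on_product_coordinates]) auto

lemma continuous_on_quad_form: "continuous_on S (quad_form M n)"
  unfolding quad_form_def by (intro continuous_intros continuous_on_coordinate)

lemma continuous_on_sq_norm: "continuous_on S (sq_norm n)"
  unfolding sq_norm_def by (intro continuous_intros continuous_on_coordinate)

lemma compact_cube: "compact (PiE UNIV (\<lambda>i::nat. if i < n then {-1..1::real} else {0}))"
proof -
  have "compactin (product_topology (\<lambda>i. euclideanreal) UNIV)
      (PiE UNIV (\<lambda>i::nat. if i < n then {-1..1::real} else {0}))"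
    by (subst compactin_PiE) auto
  then show ?thesis by (simp add: euclidean_product_topology compactin_euclidean_iff)
qed

text \<open>Vectors are functions on nat of which only the first n entries matter; truncating them
  to 0 beyond n puts the unit sphere inside a compact cube of the product topology.\<close>

lemma quad_form_min_on_unit_sphere:
  assumes "n \<ge> 1"
  obtains y0 where "sq_norm n y0 = 1" "\<And>y. sq_norm n y = 1 \<Longrightarrow> quad_form M n y0 \<le> quad_form M n y"
proof -
  define S where "S = PiE UNIV (\<lambda>i. if i < n then {-1..1} else {0}) \<inter> {y. sq_norm n y = 1}"
  have "compact S"
    unfolding S_def by (intro compact_Int_closed compact_cube closed_Collect_eq
        continuous_on_sq_norm continuous_on_const)
  moreover have "(\<lambda>i. if i = 0 then 1 else 0) \<in> S"
  proof -
    have "sq_norm n (\<lambda>i. if i = 0 then 1 else 0) = (\<Sum>i<n. if i = 0 then 1 else 0)"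
      unfolding sq_norm_def by (intro sum.cong) auto
    then show ?thesis using assms by (simp add: S_def PiE_iff)
  qed
  ultimately obtain y0 where y0: "y0 \<in> S" and min: "\<And>y. y \<in> S \<Longrightarrow> quad_form M n y0 \<le> quad_form M n y"
    using continuous_attains_inf[OF _ _ continuous_on_quad_form, of S] by blast
  have "quad_form M n y0 \<le> quad_form M n y" if y: "sq_norm n y = 1" for y
  proof -
    define z where "z i = (if i < n then y i else 0)" for i
    have "\<bar>y i\<bar> \<le> 1" if "i < n" for i
      using square_le_sq_norm[OF that, of y] y by (simp add: abs_square_le_1)
    moreover have "sq_norm n z = 1" using y sq_norm_cong[of n z y] by (simp add: z_def)
    ultimately have "z \<in> S" by (simp add: S_def PiE_iff z_def abs_le_iff)
    moreover have "quad_form M n z = quad_form M n y" by (rule quad_form_cong) (simp add: z_def)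
    ultimately show ?thesis using min[of z] by simp
  qed
  moreover have "sq_norm n y0 = 1" using y0 by (simp add: S_def)
  ultimately show thesis using that by blast
qed

lemma rayleigh_minimum_exists:
  assumes "n \<ge> 1"
  obtains y0 where "sq_norm n y0 = 1" "\<And>y. quad_form M n y0 * sq_norm n y \<le> quad_form M n y"
proof -
  obtain y0 where y0: "sq_norm n y0 = 1"
    and min: "\<And>y. sq_norm n y = 1 \<Longrightarrow> quad_form M n y0 \<le> quad_form M n y"
    using quad_form_min_on_unit_sphere[OF assms] by blast
  have "quad_form M n y0 * sq_norm n y \<le> quad_form M n y" for y
  proof (cases "sq_norm n y = 0")
    case True
    then have "quad_form M n y = 0" by (simp add: sq_norm_eq_0_iff quad_form_def)
    with True show ?thesis by simp
  next
    case False
    define c where "c = 1 / sqrt (sq_norm n y)"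
    have s: "c\<^sup>2 * sq_norm n y = 1" "c\<^sup>2 > 0"
      using False sq_norm_nonneg[of n y] by (auto simp: c_def power_divide)
    then have "quad_form M n y0 \<le> c\<^sup>2 * quad_form M n y"
      using min[of "\<lambda>i. c * y i"] by (simp add: sq_norm_scale quad_form_scale)
    then have "quad_form M n y0 * (c\<^sup>2 * sq_norm n y) \<le> c\<^sup>2 * quad_form M n y"
      using s by simp
    then show ?thesis using s(2) by (simp add: mult.left_commute)
  qed
  with y0 that show thesis by blast
qed

lemma linear_coefficient_zero:
  fixes a c :: real
  assumes "a \<ge> 0" "\<And>t. 2 * t * a + t\<^sup>2 * c \<ge> 0"
  shows "a = 0"
proof (rule ccontr)
  assume "a \<noteq> 0"
  with assms have a: "a > 0" by auto
  define d where "d = \<bar>c\<bar> + 1"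
  have d: "d > 0" unfolding d_def by auto
  have "2 * (- a / d) * a + (- a / d)\<^sup>2 * c = a\<^sup>2 * (c - 2 * d) / d\<^sup>2"
    using d by (simp add: power2_eq_square divide_simps) (simp add: algebra_simps)
  also have "\<dots> < 0"
    using a d by (intro divide_neg_pos mult_pos_neg) (auto simp: d_def)
  finally show False using assms(2)[of "- a / d"] by simp
qed

text \<open>First variation: along y0 + t w with w = M y0 - l y0 the Rayleigh inequality has
  linear term 2 t |w|^2, which must vanish at a minimiser.\<close>

lemma rayleigh_minimizer_eigenfunction:
  assumes sym: "\<And>i j. i < n \<Longrightarrow> j < n \<Longrightarrow> M $$ (i,j) = M $$ (j,i)"
    and ge: "\<And>y. l * sq_norm n y \<le> quad_form M n y"
    and eq: "quad_form M n y0 = l * sq_norm n y0"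
    and i: "i < n"
  shows "(\<Sum>j<n. M $$ (i,j) * y0 j) = l * y0 i"
proof -
  define w where "w i = (\<Sum>j<n. M $$ (i,j) * y0 j) - l * y0 i" for i
  have "(\<Sum>i<n. w i * (\<Sum>j<n. M $$ (i,j) * y0 j)) - l * (\<Sum>i<n. y0 i * w i) = sq_norm n w"
    unfolding sq_norm_def w_def
    by (simp add: sum_subtractf[symmetric] sum_distrib_left power2_eq_square algebra_simps)
  then have cross: "(\<Sum>i<n. w i * (\<Sum>j<n. M $$ (i,j) * y0 j)) = sq_norm n w + l * (\<Sum>i<n. y0 i * w i)"
    by linarith
  have "2 * t * sq_norm n w + t\<^sup>2 * (quad_form M n w - l * sq_norm n w) \<ge> 0" for t
  proof -
    let ?P = "\<Sum>i<n. y0 i * w i"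
    have "l * sq_norm n (\<lambda>i. y0 i + t * w i) \<le> quad_form M n (\<lambda>i. y0 i + t * w i)"
      by (rule ge)
    moreover have "quad_form M n (\<lambda>i. y0 i + t * w i)
        = quad_form M n y0 + 2 * t * (\<Sum>i<n. w i * (\<Sum>j<n. M $$ (i,j) * y0 j)) + t\<^sup>2 * quad_form M n w"
      by (rule quad_form_add_scaled[OF sym])
    ultimately have "l * (sq_norm n y0 + 2 * t * ?P + t\<^sup>2 * sq_norm n w)
        \<le> l * sq_norm n y0 + 2 * t * (sq_norm n w + l * ?P) + t\<^sup>2 * quad_form M n w"
      unfolding sq_norm_add_scaled eq cross by simp
    moreover have "l * sq_norm n y0 + 2 * t * (sq_norm n w + l * ?P) + t\<^sup>2 * quad_form M n w
        - l * (sq_norm n y0 + 2 * t * ?P + t\<^sup>2 * sq_norm n w)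
        = 2 * t * sq_norm n w + t\<^sup>2 * (quad_form M n w - l * sq_norm n w)"
      by (simp add: algebra_simps)
    ultimately show ?thesis by linarith
  qed
  then have "sq_norm n w = 0" by (intro linear_coefficient_zero sq_norm_nonneg)
  then show ?thesis using i by (simp add: sq_norm_eq_0_iff w_def)
qed

lemma symmetric_min_eigenvalue:
  assumes M: "M \<in> carrier_mat n n"
    and sym: "\<And>i j. i < n \<Longrightarrow> j < n \<Longrightarrow> M $$ (i,j) = M $$ (j,i)" and n: "n \<ge> 1"
  obtains l where "eigenvalue M l" "\<And>y. l * sq_norm n y \<le> quad_form M n y"
proof -
  obtain y0 where y0: "sq_norm n y0 = 1"
    and min: "\<And>y. quad_form M n y0 * sq_norm n y \<le> quad_form M n y"
    using rayleigh_minimum_exists[OF n] by blast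
  have "\<exists>i<n. y0 i \<noteq> 0" using y0 sq_norm_eq_0_iff[of n y0] by auto
  then have "eigenvalue M (quad_form M n y0)"
    using rayleigh_minimizer_eigenfunction[OF sym min] y0
    unfolding eigenvalue_iff_eigenfunction[OF M] by auto
  with min that show thesis by blast
qed

section \<open>The signless Laplacian\<close>

lemma signless_laplacian_carrier: "signless_laplacian n E \<in> carrier_mat n n"
  unfolding signless_laplacian_def by simp

lemma signless_laplacian_symmetric:
  "simple_graph n E \<Longrightarrow> i < n \<Longrightarrow> j < n \<Longrightarrow>
    signless_laplacian n E $$ (i,j) = signless_laplacian n E $$ (j,i)"
  unfolding signless_laplacian_def simple_graph_def by auto

lemma degree_eq_sum: "real (degree n E u) = (\<Sum>v<n. of_bool (E u v))"
proof -
  have "{..<n} \<inter> {v. E u v} = {v. v < n \<and> E u v}" by auto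
  then show ?thesis by (simp add: degree_def)
qed

lemma quad_form_signless_laplacian:
  "quad_form (signless_laplacian n E) n y = (\<Sum>u<n. y u * (\<Sum>v<n. of_bool (E u v) * (y u + y v)))"
proof -
  have "(\<Sum>v<n. ((if u = v then real (degree n E u) else 0) + of_bool (E u v)) * y v)
      = (\<Sum>v<n. of_bool (E u v) * (y u + y v))" if "u < n" for u
  proof -
    have "(\<Sum>v<n. ((if u = v then real (degree n E u) else 0) + of_bool (E u v)) * y v)
        = (\<Sum>v<n. if u = v then real (degree n E u) * y v else 0) + (\<Sum>v<n. of_bool (E u v) * y v)"
      by (simp add: sum.distrib distrib_right if_distrib[where f = "\<lambda>x. x * _"] cong: if_cong)
    also have "\<dots> = real (degree n E u) * y u + (\<Sum>v<n. of_bool (E u v) * y v)"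
      using that by simp
    finally show ?thesis
      by (simp add: degree_eq_sum distrib_left sum.distrib sum_distrib_right)
  qed
  moreover have "quad_form (signless_laplacian n E) n y
      = (\<Sum>u<n. y u * (\<Sum>v<n. ((if u = v then real (degree n E u) else 0) + of_bool (E u v)) * y v))"
    unfolding quad_form_def signless_laplacian_def by (simp add: sum_distrib_left mult_ac of_bool_def)
  ultimately show ?thesis by simp
qed

lemma finite_eigenvalues: "M \<in> carrier_mat n n \<Longrightarrow> finite {k. eigenvalue M k}"
  for M :: "'a :: field mat"
proof -
  assume M: "M \<in> carrier_mat n n"
  have "char_poly M \<noteq> 0" using degree_monic_char_poly[OF M] by auto
  then have "finite {k. poly (char_poly M) k = 0}" by (rule poly_roots_finite)
  then show ?thesis using eigenvalue_root_char_poly[OF M] by simp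
qed

lemma q_min_rayleigh:
  assumes "simple_graph n E"
  shows "eigenvalue (signless_laplacian n E) (q_min n E)"
    and "q_min n E * sq_norm n y \<le> quad_form (signless_laplacian n E) n y"
proof -
  have "n \<ge> 1" using assms by (simp add: simple_graph_def)
  then obtain l where ev: "eigenvalue (signless_laplacian n E) l"
    and ge: "\<And>y. l * sq_norm n y \<le> quad_form (signless_laplacian n E) n y"
    using symmetric_min_eigenvalue[OF signless_laplacian_carrier
        signless_laplacian_symmetric[OF assms]] by blast
  have "q_min n E = l"
    unfolding q_min_def using ev
    by (intro Min_eqI finite_eigenvalues[OF signless_laplacian_carrier])
      (auto intro: eigenvalue_ge_if_quad_form_ge[OF signless_laplacian_carrier _ ge])
  with ev ge show "eigenvalue (signless_laplacian n E) (q_min n E)"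
    and "q_min n E * sq_norm n y \<le> quad_form (signless_laplacian n E) n y" by auto
qed

lemma q_min_greatest:
  assumes "simple_graph n E" and "\<And>y. c * sq_norm n y \<le> quad_form (signless_laplacian n E) n y"
  shows "c \<le> q_min n E"
  using eigenvalue_ge_if_quad_form_ge[OF signless_laplacian_carrier q_min_rayleigh(1)] assms by blast

lemma q_min_le_degree:
  assumes "simple_graph n E" and v: "v < n"
  shows "q_min n E \<le> real (degree n E v)"
proof -
  define e :: "nat \<Rightarrow> real" where "e w = of_bool (w = v)" for w
  have "(e w)\<^sup>2 = e w" for w by (simp add: e_def)
  then have "sq_norm n e = 1" using v by (simp add: sq_norm_def e_def)
  moreover have "quad_form (signless_laplacian n E) n e = real (degree n E v)"
  proof -
    have "\<not> E v v" using assms by (simp add: simple_graph_def)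
    then have "(\<Sum>w<n. of_bool (E v w) * (1 + e w)) = (\<Sum>w<n. of_bool (E v w) :: real)"
      by (intro sum.cong) (auto simp: e_def)
    then show ?thesis
      using v by (simp add: quad_form_signless_laplacian degree_eq_sum e_def)
  qed
  ultimately show ?thesis using q_min_rayleigh(2)[OF assms(1), of e] by simp
qed

definition independent_set :: "(nat \<Rightarrow> nat \<Rightarrow> bool) \<Rightarrow> nat set \<Rightarrow> bool" where
  "independent_set E A \<longleftrightarrow> (\<forall>u\<in>A. \<forall>v\<in>A. \<not> E u v)"

lemma edge_sum_from_independent_set:
  assumes "independent_set E A" and "A \<inter> B = {}" and "u \<in> A"
  shows "(\<Sum>v<n. of_bool (E u v) * (1 + (of_bool (v \<in> A) - of_bool (v \<in> B))))
    \<le> real (card ({..<n} - (A \<union> B)))"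
proof -
  have "{..<n} \<inter> {v. v \<notin> A \<union> B} = {..<n} - (A \<union> B)" by auto
  then have "real (card ({..<n} - (A \<union> B))) = (\<Sum>v<n. of_bool (v \<notin> A \<union> B))" by simp
  also have "\<dots> \<ge> (\<Sum>v<n. of_bool (E u v) * (1 + (of_bool (v \<in> A) - of_bool (v \<in> B))))"
    using assms by (intro sum_mono) (auto simp: independent_set_def)
  finally show ?thesis .
qed

definition signed_indicator :: "nat set \<Rightarrow> nat set \<Rightarrow> nat \<Rightarrow> real" where
  "signed_indicator A B v = of_bool (v \<in> A) - of_bool (v \<in> B)"

lemma sq_norm_signed_indicator:
  assumes "A \<subseteq> {..<n}" "B \<subseteq> {..<n}" "A \<inter> B = {}"
  shows "sq_norm n (signed_indicator A B) = real (card A) + real (card B)"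
proof -
  have "sq_norm n (signed_indicator A B) = (\<Sum>v<n. of_bool (v \<in> A) + of_bool (v \<in> B))"
    unfolding sq_norm_def using assms(3) by (intro sum.cong) (auto simp: signed_indicator_def)
  also have "\<dots> = real (card A) + real (card B)"
    using assms(1,2) by (simp add: sum.distrib Int_absorb1 Int_absorb2)
  finally show ?thesis .
qed

lemma quad_form_signed_indicator_le:
  assumes sub: "A \<subseteq> {..<n}" "B \<subseteq> {..<n}" and disj: "A \<inter> B = {}"
    and indep: "independent_set E A" "independent_set E B"
  shows "quad_form (signless_laplacian n E) n (signed_indicator A B)
    \<le> (real (card A) + real (card B)) * real (card ({..<n} - (A \<union> B)))"
proof -
  define x where "x = signed_indicator A B"
  define R where "R = real (card ({..<n} - (A \<union> B)))"
  have "x u * (\<Sum>v<n. of_bool (E u v) * (x u + x v)) \<le> (of_bool (u \<in> A) + of_bool (u \<in> B)) * R" for u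
  proof -
    consider "u \<in> A" | "u \<in> B" | "u \<notin> A" "u \<notin> B" by blast
    then show ?thesis
    proof cases
      case 1
      then show ?thesis using disj edge_sum_from_independent_set[OF indep(1) disj 1, of n]
        by (auto simp: x_def signed_indicator_def R_def)
    next
      case 2
      have "x u = -1" using 2 disj by (auto simp: x_def signed_indicator_def)
      then have "x u * (\<Sum>v<n. of_bool (E u v) * (x u + x v))
          = (\<Sum>v<n. of_bool (E u v) * (1 + (of_bool (v \<in> B) - of_bool (v \<in> A))))"
        by (simp add: sum_negf[symmetric])
          (intro sum.cong refl, simp add: x_def signed_indicator_def algebra_simps)
      also have "\<dots> \<le> R"
        using edge_sum_from_independent_set[OF indep(2) _ 2, of A n] disj
        by (auto simp: R_def Un_commute)
      finally show ?thesis using 2 disj by auto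
    qed (simp add: x_def signed_indicator_def)
  qed
  then have "quad_form (signless_laplacian n E) n x \<le> (\<Sum>u<n. (of_bool (u \<in> A) + of_bool (u \<in> B)) * R)"
    unfolding quad_form_signless_laplacian by (rule sum_mono)
  also have "\<dots> = (real (card A) + real (card B)) * R"
    using sub by (simp add: sum.distrib sum_distrib_right[symmetric] Int_absorb1 Int_absorb2)
  finally show ?thesis by (simp add: x_def R_def)
qed

lemma q_min_le_two_independent_sets:
  assumes graph: "simple_graph n E" and sub: "A \<subseteq> {..<n}" "B \<subseteq> {..<n}" and disj: "A \<inter> B = {}"
    and indep: "independent_set E A" "independent_set E B" and ne: "A \<noteq> {}"
  shows "q_min n E \<le> real n - real (card A) - real (card B)"
proof -
  have fin: "finite A" "finite B" using sub finite_subset by blast+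
  have "card A > 0" using fin(1) ne by (simp add: card_gt_0_iff)
  then have pos: "real (card A) + real (card B) > 0" by linarith
  have "card (A \<union> B) \<le> n" using sub card_mono[of "{..<n}" "A \<union> B"] by simp
  then have "real (card ({..<n} - (A \<union> B))) = real n - real (card A) - real (card B)"
    using sub disj fin by (simp add: card_Diff_subset card_Un_disjoint of_nat_diff)
  then have "q_min n E * (real (card A) + real (card B))
      \<le> (real (card A) + real (card B)) * (real n - real (card A) - real (card B))"
    using q_min_rayleigh(2)[OF graph, of "signed_indicator A B"]
      sq_norm_signed_indicator[OF sub disj] quad_form_signed_indicator_le[OF sub disj indep]
    by simp
  with pos show ?thesis by (simp add: mult.commute)
qed

lemma simple_graph_complete: "r \<ge> 1 \<Longrightarrow> simple_graph r (\<lambda>i j. i \<noteq> j)"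
  by (simp add: simple_graph_def)

lemma q_min_complete_graph_ge:
  assumes "r \<ge> 1"
  shows "real r - 2 \<le> q_min r (\<lambda>i j. i \<noteq> j)"
proof (rule q_min_greatest[OF simple_graph_complete[OF assms]])
  fix y :: "nat \<Rightarrow> real"
  define S where "S = (\<Sum>v<r. y v)"
  have row: "(\<Sum>v<r. of_bool (u \<noteq> v) * (y u + y v)) = (real r - 2) * y u + S" if u: "u < r" for u
  proof -
    have "{..<r} \<inter> {v. u \<noteq> v} = {..<r} - {u}" by auto
    then have "(\<Sum>v<r. of_bool (u \<noteq> v) * (y u + y v)) = (\<Sum>v<r. y u + y v) - (y u + y u)"
      using u by (simp add: sum_diff1)
    then show ?thesis by (simp add: S_def sum.distrib algebra_simps)
  qed
  have "quad_form (signless_laplacian r (\<lambda>i j. i \<noteq> j)) r y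
      = (\<Sum>u<r. (real r - 2) * (y u)\<^sup>2 + S * y u)"
    unfolding quad_form_signless_laplacian
  proof (intro sum.cong refl)
    fix u assume "u \<in> {..<r}"
    then have u: "u < r" by simp
    show "y u * (\<Sum>v<r. of_bool (u \<noteq> v) * (y u + y v)) = (real r - 2) * (y u)\<^sup>2 + S * y u"
      unfolding row[OF u] by (simp add: algebra_simps power2_eq_square)
  qed
  also have "\<dots> = (real r - 2) * sq_norm r y + S\<^sup>2"
    by (simp add: sq_norm_def sum.distrib sum_distrib_left[symmetric] S_def power2_eq_square)
  finally show "(real r - 2) * sq_norm r y \<le> quad_form (signless_laplacian r (\<lambda>i j. i \<noteq> j)) r y"
    by simp
qed

section \<open>Maximum cliques\<close>

lemma sum_le_of_pairwise_sum_le: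
  fixes a :: "'a \<Rightarrow> real"
  assumes K: "finite K" "2 \<le> card K" and pair: "\<And>i j. i \<in> K \<Longrightarrow> j \<in> K \<Longrightarrow> i \<noteq> j \<Longrightarrow> a i + a j \<le> b"
  shows "2 * sum a K \<le> real (card K) * b"
proof -
  have k: "real (card K - Suc 0) = real (card K) - 1" using K(2) by (simp add: of_nat_diff)
  have "(\<Sum>i\<in>K. \<Sum>j\<in>K - {i}. a i + a j) = (\<Sum>i\<in>K. (real (card K) - 1) * a i + (sum a K - a i))"
    using K(1) by (intro sum.cong refl) (simp add: sum.distrib k sum_diff1)
  also have "\<dots> = (real (card K) - 1) * (2 * sum a K)"
    by (simp add: sum.distrib sum_subtractf sum_distrib_left sum_distrib_right algebra_simps)
  finally have "(real (card K) - 1) * (2 * sum a K) = (\<Sum>i\<in>K. \<Sum>j\<in>K - {i}. a i + a j)" ..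
  also have "\<dots> \<le> (\<Sum>i\<in>K. \<Sum>j\<in>K - {i}. b)" using pair by (intro sum_mono) auto
  also have "\<dots> = (real (card K) - 1) * (real (card K) * b)" by (simp add: k)
  finally show ?thesis using K(2) by simp
qed

definition clique :: "(nat \<Rightarrow> nat \<Rightarrow> bool) \<Rightarrow> nat set \<Rightarrow> bool" where
  "clique E K \<longleftrightarrow> (\<forall>i\<in>K. \<forall>j\<in>K. i \<noteq> j \<longrightarrow> E i j)"

lemma has_clique_if_clique:
  assumes "K \<subseteq> {..<n}" "clique E K" "m \<le> card K"
  shows "has_clique n E m"
proof -
  obtain S where "S \<subseteq> K" "card S = m" using obtain_subset_with_card_n[OF assms(3)] by blast
  with assms(1,2) show ?thesis
    unfolding has_clique_def clique_def by (intro exI[of _ S]) auto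
qed

lemma no_clique_larger_than_vertex_set: "\<not> has_clique n E (n + 1)"
proof
  assume "has_clique n E (n + 1)"
  then obtain S where "S \<subseteq> {0..<n}" "card S = n + 1" unfolding has_clique_def by blast
  then show False using card_mono[of "{0..<n}" S] by simp
qed

locale maximum_clique =
  fixes n :: nat and E :: "nat \<Rightarrow> nat \<Rightarrow> bool" and K :: "nat set"
  assumes graph: "simple_graph n E"
    and clique_subset: "K \<subseteq> {..<n}"
    and clique: "clique E K"
    and maximum: "\<And>S. S \<subseteq> {..<n} \<Longrightarrow> clique E S \<Longrightarrow> card S \<le> card K"

lemma maximum_clique_exists:
  assumes "simple_graph n E"
  obtains K where "maximum_clique n E K"
proof -
  have "{} \<subseteq> {..<n} \<and> clique E {}" by (simp add: clique_def)
  moreover have "\<forall>S. S \<subseteq> {..<n} \<and> clique E S \<longrightarrow> card S < Suc n"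
    using card_mono[OF finite_lessThan, of _ n] by (simp add: less_Suc_eq_le)
  ultimately obtain K where "K \<subseteq> {..<n} \<and> clique E K"
    and "\<forall>S. S \<subseteq> {..<n} \<and> clique E S \<longrightarrow> card S \<le> card K"
    using ex_has_greatest_nat[of "\<lambda>S. S \<subseteq> {..<n} \<and> clique E S" "{}" card "Suc n"] by blast
  with assms that show thesis by (auto simp: maximum_clique_def)
qed

context maximum_clique
begin

lemma finite_clique: "finite K"
  using clique_subset finite_subset by blast

lemma card_clique_ge_1: "card K \<ge> 1"
  using maximum[of "{0}"] graph by (simp add: simple_graph_def clique_def)

lemma card_clique_le: "\<not> has_clique n E (r + 1) \<Longrightarrow> card K \<le> r"
  using has_clique_if_clique[OF clique_subset clique, of "r + 1"] by linarith

text \<open>The set A_i of vertices adjacent to all of K except i; note that i \<in> A_i.\<close>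

definition misses_only :: "nat \<Rightarrow> nat set" where
  "misses_only i = {w. w < n \<and> \<not> E w i \<and> (\<forall>j\<in>K - {i}. E w j)}"

lemma misses_only_subset: "misses_only i \<subseteq> {..<n}"
  by (auto simp: misses_only_def)

lemma self_mem_misses_only: "i \<in> K \<Longrightarrow> i \<in> misses_only i"
  using clique clique_subset graph by (auto simp: misses_only_def clique_def simple_graph_def)

lemma misses_only_disjoint: "i \<in> K \<Longrightarrow> i \<noteq> j \<Longrightarrow> misses_only i \<inter> misses_only j = {}"
  by (auto simp: misses_only_def)

lemma independent_set_misses_only:
  assumes i: "i \<in> K"
  shows "independent_set E (misses_only i)"
  unfolding independent_set_def
proof (intro ballI notI)
  fix u v assume u: "u \<in> misses_only i" and v: "v \<in> misses_only i" and uv: "E u v"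
  have irrefl: "\<And>w. w < n \<Longrightarrow> \<not> E w w" and sym: "\<And>w x. w < n \<Longrightarrow> x < n \<Longrightarrow> E w x \<Longrightarrow> E x w"
    using graph by (auto simp: simple_graph_def)
  have un: "u < n" and vn: "v < n" using u v by (auto simp: misses_only_def)
  have "u \<noteq> v" "u \<notin> K - {i}" "v \<notin> K - {i}" using u v uv irrefl by (auto simp: misses_only_def)
  moreover have "E u x \<and> E x u \<and> E v x \<and> E x v" if "x \<in> K - {i}" for x
    using that u v sym un vn clique_subset by (auto simp: misses_only_def)
  then have "clique E (insert u (insert v (K - {i})))"
    using uv sym[OF un vn uv] clique by (auto simp: clique_def)
  moreover have "insert u (insert v (K - {i})) \<subseteq> {..<n}"
    using un vn clique_subset by auto
  ultimately have "card (K - {i}) + 2 \<le> card K"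
    using maximum[of "insert u (insert v (K - {i}))"] finite_clique by simp
  then show False using i finite_clique card_clique_ge_1 by simp
qed

lemma card_neighbours_in_clique:
  assumes w: "w < n"
  shows "real (card {j\<in>K. E w j}) \<le> real (card K) - 2 + (\<Sum>i\<in>K. of_bool (w \<in> misses_only i))"
proof -
  define N where "N = {j\<in>K. E w j}"
  have "N \<noteq> K"
  proof
    assume NK: "N = K"
    then have "w \<notin> K" using graph w by (auto simp: N_def simple_graph_def)
    moreover have "E w i \<and> E i w" if "i \<in> K" for i
    proof -
      have "E w i" "i < n" using NK that clique_subset by (auto simp: N_def)
      then show ?thesis using graph w by (simp add: simple_graph_def)
    qed
    then have "clique E (insert w K)" using clique by (auto simp: clique_def)
    ultimately show False
      using maximum[of "insert w K"] clique_subset w finite_clique by simp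
  qed
  then have less: "card N < card K" using finite_clique by (intro psubset_card_mono) (auto simp: N_def)
  show ?thesis
  proof (cases "\<exists>i\<in>K. w \<in> misses_only i")
    case True
    then obtain i where "i \<in> K" "w \<in> misses_only i" by blast
    then have "of_bool (w \<in> misses_only i) \<le> (\<Sum>i\<in>K. of_bool (w \<in> misses_only i) :: real)"
      using finite_clique by (intro member_le_sum) auto
    then have "1 \<le> (\<Sum>i\<in>K. of_bool (w \<in> misses_only i) :: real)"
      using \<open>w \<in> misses_only i\<close> by simp
    with less show ?thesis by (simp add: N_def)
  next
    case False
    have "card N \<noteq> card K - 1"
    proof
      assume "card N = card K - 1"
      then have "card (K - N) = 1" using finite_clique less by (simp add: N_def card_Diff_subset)
      then obtain i where "K - N = {i}" by (rule card_1_singletonE)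
      then have "i \<in> K" "w \<in> misses_only i" using w by (auto simp: N_def misses_only_def)
      with False show False by blast
    qed
    with less have "real (card N) \<le> real (card K) - 2" by linarith
    moreover have "0 \<le> (\<Sum>i\<in>K. of_bool (w \<in> misses_only i) :: real)" by (intro sum_nonneg) simp
    ultimately show ?thesis by (simp add: N_def)
  qed
qed

lemma degree_sum_clique_le:
  "(\<Sum>v\<in>K. real (degree n E v))
    \<le> real n * (real (card K) - 2) + (\<Sum>i\<in>K. real (card (misses_only i)))"
proof -
  have "(\<Sum>v\<in>K. real (degree n E v)) = (\<Sum>v\<in>K. \<Sum>w<n. of_bool (E v w))"
    by (simp add: degree_eq_sum)
  also have "\<dots> = (\<Sum>w<n. \<Sum>v\<in>K. of_bool (E v w))"
    by (rule sum.swap)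
  also have "\<dots> = (\<Sum>w<n. real (card {j\<in>K. E w j}))"
  proof (intro sum.cong refl)
    fix w assume "w \<in> {..<n}"
    then have "E v w \<longleftrightarrow> E w v" if "v \<in> K" for v
      using that clique_subset graph by (auto simp: simple_graph_def)
    then have "(\<Sum>v\<in>K. of_bool (E v w) :: real) = (\<Sum>v\<in>K. of_bool (E w v))" by simp
    moreover have "K \<inter> {v. E w v} = {j\<in>K. E w j}" by auto
    ultimately show "(\<Sum>v\<in>K. of_bool (E v w)) = real (card {j\<in>K. E w j})"
      using finite_clique by simp
  qed
  also have "\<dots> \<le> (\<Sum>w<n. real (card K) - 2 + (\<Sum>i\<in>K. of_bool (w \<in> misses_only i)))"
    by (intro sum_mono card_neighbours_in_clique) simp
  also have "\<dots> = real n * (real (card K) - 2) + (\<Sum>w<n. \<Sum>i\<in>K. of_bool (w \<in> misses_only i))"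
    by (simp add: sum.distrib)
  also have "\<dots> = real n * (real (card K) - 2) + (\<Sum>i\<in>K. \<Sum>w<n. of_bool (w \<in> misses_only i))"
    by (subst sum.swap) (rule refl)
  also have "\<dots> = real n * (real (card K) - 2) + (\<Sum>i\<in>K. real (card (misses_only i)))"
    using misses_only_subset by (simp add: Int_absorb1)
  finally show ?thesis .
qed

lemma q_min_le_clique_degrees:
  "real (card K) * q_min n E \<le> real n * (real (card K) - 2) + (\<Sum>i\<in>K. real (card (misses_only i)))"
proof -
  have "(\<Sum>v\<in>K. q_min n E) \<le> (\<Sum>v\<in>K. real (degree n E v))"
    using clique_subset by (intro sum_mono q_min_le_degree[OF graph]) auto
  with degree_sum_clique_le show ?thesis by simp
qed

lemma q_min_le_misses_only_pair:
  assumes "i \<in> K" "j \<in> K" "i \<noteq> j"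
  shows "q_min n E \<le> real n - real (card (misses_only i)) - real (card (misses_only j))"
proof (rule q_min_le_two_independent_sets[OF graph misses_only_subset misses_only_subset])
  show "misses_only i \<inter> misses_only j = {}" using assms(1,3) by (rule misses_only_disjoint)
  show "independent_set E (misses_only i)" "independent_set E (misses_only j)"
    using assms(1,2) by (simp_all add: independent_set_misses_only)
  show "misses_only i \<noteq> {}" using self_mem_misses_only[OF assms(1)] by blast
qed

lemma q_min_nonpos_if_card_1:
  assumes "card K = 1"
  shows "q_min n E \<le> 0"
proof -
  obtain i where K: "K = {i}" using assms by (rule card_1_singletonE)
  have "card (misses_only i) \<le> n" using card_mono[OF finite_lessThan misses_only_subset] by simp
  then show ?thesis using q_min_le_clique_degrees by (simp add: K)
qed

lemma q_min_le_if_card_ge_2: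
  assumes k: "2 \<le> card K"
  shows "q_min n E \<le> real n * (1 - 4 / (3 * real (card K)))"
proof -
  define a where "a i = real (card (misses_only i))" for i
  define q where "q = q_min n E"
  define k where "k = real (card K)"
  have "2 * sum a K \<le> k * (real n - q)"
    unfolding k_def q_def a_def
    by (rule sum_le_of_pairwise_sum_le[OF finite_clique k]) (use q_min_le_misses_only_pair in force)
  moreover have "k * q \<le> real n * (k - 2) + sum a K"
    using q_min_le_clique_degrees by (simp add: a_def q_def k_def)
  moreover have "k * (real n - q) = k * real n - k * q" "real n * (k - 2) = k * real n - 2 * real n"
    by (simp_all add: algebra_simps)
  ultimately have "3 * (k * q) \<le> 3 * (k * real n) - 4 * real n" by linarith
  moreover have "k > 0" using k by (simp add: k_def)
  ultimately show ?thesis unfolding q_def[symmetric] k_def[symmetric] by (simp add: field_simps)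
qed

end

section \<open>Bounds on c_r\<close>

lemma q_min_le_if_no_clique:
  assumes r: "r \<ge> 3" and graph: "simple_graph n E" and no_clique: "\<not> has_clique n E (r + 1)"
  shows "q_min n E \<le> (1 - 3 / (3 * real r - 1)) * real n"
proof -
  obtain K where "maximum_clique n E K" using maximum_clique_exists[OF graph] by blast
  then interpret maximum_clique n E K .
  have k: "card K \<le> r" "1 \<le> card K" using card_clique_le[OF no_clique] card_clique_ge_1 .
  have bound: "3 / (3 * real r - 1) \<le> 4 / (3 * real r)" using r by (simp add: divide_simps)
  show ?thesis
  proof (cases "card K = 1")
    case True
    then have "q_min n E \<le> 0" by (rule q_min_nonpos_if_card_1)
    moreover have "3 / (3 * real r - 1) \<le> 1" using r by (simp add: divide_simps)
    then have "0 \<le> (1 - 3 / (3 * real r - 1)) * real n" by simp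
    ultimately show ?thesis by linarith
  next
    case False
    then have "q_min n E \<le> real n * (1 - 4 / (3 * real (card K)))"
      using k by (intro q_min_le_if_card_ge_2) simp
    also have "\<dots> \<le> real n * (1 - 4 / (3 * real r))"
      using k False by (intro mult_left_mono diff_left_mono divide_left_mono) auto
    also have "\<dots> \<le> (1 - 3 / (3 * real r - 1)) * real n"
      using bound by (simp add: mult.commute mult_left_mono)
    finally show ?thesis .
  qed
qed

theorem corollary7:
  fixes r :: nat
  assumes "r \<ge> 3"
  shows "1 - 2 / real r \<le> c_const r \<and> c_const r \<le> 1 - 3 / (3 * real r - 1)"
proof -
  define X where "X = {q_min n E / real n | n E. simple_graph n E \<and> \<not> has_clique n E (r + 1)}"
  have upper: "x \<le> 1 - 3 / (3 * real r - 1)" if xX: "x \<in> X" for x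
  proof -
    obtain n E where x: "x = q_min n E / real n"
      and graph: "simple_graph n E" and no_clique: "\<not> has_clique n E (r + 1)"
      using xX unfolding X_def by blast
    have "real n > 0" using graph by (simp add: simple_graph_def)
    with q_min_le_if_no_clique[OF assms graph no_clique] show ?thesis
      by (simp add: x divide_le_eq)
  qed
  have complete: "q_min r (\<lambda>i j. i \<noteq> j) / real r \<in> X"
    unfolding X_def using simple_graph_complete[of r] no_clique_larger_than_vertex_set assms by fastforce
  have "1 - 2 / real r \<le> q_min r (\<lambda>i j. i \<noteq> j) / real r"
    using q_min_complete_graph_ge[of r] assms by (simp add: divide_simps)
  also have "\<dots> \<le> Sup X" using complete upper by (intro cSup_upper bdd_aboveI) auto
  finally have "1 - 2 / real r \<le> Sup X" .
  moreover have "Sup X \<le> 1 - 3 / (3 * real r - 1)" using complete upper by (intro cSup_least) auto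
  ultimately show ?thesis unfolding c_const_def X_def by simp
qed

end
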